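(* There is an absolute constant $C$ such that for every $\epsilon\in(0,1)$ and every $(n,d,\lambda)$-graph $G$ with $\lambda\le(1-\epsilon)d$ and with no cycle of length 4 (and $d\ge2$), $m(G,2)\le C\frac{n\log d}{\epsilon^2d^2}$.
   Context: Bootstrap percolation with threshold $r\ge 2$ on a graph $G=(V,E)$: given a set $A_0\subseteq V$ of seeds, define for $i\ge1$ $A_i=A_{i-1}\cup\{v:|N(v)\cap A_{i-1}|\ge r\}$, where $N(v)$ is the set of neighbors of $v$, and $\langle A_0\rangle=\bigcup_i A_i$. The set $A_0$ is contagious if $\langle A_0\rangle=V$; $m(G,r)$ denotes the minimum cardinality of a contagious set. An $(n,d,\lambda)$-graph is a $d$-regular graph on $n$ vertices whose adjacency eigenvalues $d=\lambda_1\ge\lambda_2\ge\dots\ge\lambda_n$ satisfy $\max\{|\lambda_2|,|\lambda_n|\}\le\lambda$. Logarithms are base 2. *)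

theory Defs
  imports "HOL-Analysis.Analysis" "Jordan_Normal_Form.Char_Poly"
    "HOL-Computational_Algebra.Polynomial"
begin

definition simple_graph :: "nat \<Rightarrow> (nat \<Rightarrow> nat \<Rightarrow> bool) \<Rightarrow> bool" where
  "simple_graph n E \<longleftrightarrow>
     (\<forall>u v. E u v \<longrightarrow> u < n \<and> v < n) \<and> (\<forall>u v. E u v \<longrightarrow> E v u) \<and> (\<forall>u. \<not> E u u)"

definition nbrs :: "nat \<Rightarrow> (nat \<Rightarrow> nat \<Rightarrow> bool) \<Rightarrow> nat \<Rightarrow> nat set" where
  "nbrs n E v = {u \<in> {0..<n}. E v u}"

definition regular :: "nat \<Rightarrow> (nat \<Rightarrow> nat \<Rightarrow> bool) \<Rightarrow> nat \<Rightarrow> bool" where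
  "regular n E d \<longleftrightarrow> (\<forall>v<n. card (nbrs n E v) = d)"

definition adj_mat :: "nat \<Rightarrow> (nat \<Rightarrow> nat \<Rightarrow> bool) \<Rightarrow> real mat" where
  "adj_mat n E = mat n n (\<lambda>(i, j). if E i j then 1 else 0)"

text \<open>Adjacency eigenvalues with multiplicity: the roots of the characteristic polynomial
  (all real, since the adjacency matrix is real symmetric).\<close>
definition adj_spectrum :: "nat \<Rightarrow> (nat \<Rightarrow> nat \<Rightarrow> bool) \<Rightarrow> real multiset" where
  "adj_spectrum n E = proots (char_poly (adj_mat n E))"

definition ndl_graph :: "nat \<Rightarrow> nat \<Rightarrow> real \<Rightarrow> (nat \<Rightarrow> nat \<Rightarrow> bool) \<Rightarrow> bool" where
  "ndl_graph n d lam E \<longleftrightarrow> simple_graph n E \<and> regular n E d \<and>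
     real d \<in># adj_spectrum n E \<and>
     (\<forall>\<mu> \<in># adj_spectrum n E. \<mu> \<le> real d) \<and>
     (\<forall>\<mu> \<in># adj_spectrum n E - {# real d #}. \<bar>\<mu>\<bar> \<le> lam)"

definition C4_free :: "(nat \<Rightarrow> nat \<Rightarrow> bool) \<Rightarrow> bool" where
  "C4_free E \<longleftrightarrow> \<not> (\<exists>a b c e. distinct [a, b, c, e] \<and> E a b \<and> E b c \<and> E c e \<and> E e a)"

definition boot_step :: "nat \<Rightarrow> (nat \<Rightarrow> nat \<Rightarrow> bool) \<Rightarrow> nat \<Rightarrow> nat set \<Rightarrow> nat set" where
  "boot_step n E r A = A \<union> {v \<in> {0..<n}. card (nbrs n E v \<inter> A) \<ge> r}"

definition boot_closure :: "nat \<Rightarrow> (nat \<Rightarrow> nat \<Rightarrow> bool) \<Rightarrow> nat \<Rightarrow> nat set \<Rightarrow> nat set" where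
  "boot_closure n E r A0 = (\<Union>i. (boot_step n E r ^^ i) A0)"

definition contagious :: "nat \<Rightarrow> (nat \<Rightarrow> nat \<Rightarrow> bool) \<Rightarrow> nat \<Rightarrow> nat set \<Rightarrow> bool" where
  "contagious n E r A0 \<longleftrightarrow> A0 \<subseteq> {0..<n} \<and> boot_closure n E r A0 = {0..<n}"

definition min_contagious :: "nat \<Rightarrow> (nat \<Rightarrow> nat \<Rightarrow> bool) \<Rightarrow> nat \<Rightarrow> nat" where
  "min_contagious n E r = (LEAST k. \<exists>A. contagious n E r A \<and> card A = k)"

end

(*
  Call a vertex set X closed if no vertex outside X has two neighbours in X; the 2-bootstrap
  closure of a seed set is the least closed superset. A vertex outside a closed set X sees at most
  one vertex of X, so the edge boundary of X equals its vertex boundary B. By the spectral bound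
  (d - lambda) |X| (n - |X|) <= n e(X, V - X), a proper closed set has |X| <= n/(eps d) and, when
  eps d >= 2, |B| >= eps d |X| / 2. Each vertex of B has d - 1 neighbours outside X, so by averaging
  some outside vertex u is adjacent to at least |B| (d - 1)/n vertices of B, and making u a seed
  infects u together with all of them. Hence every new seed multiplies the closure by at least
  1 + eps d^2/(4n), and C4-freeness (n >= d^2/2) keeps this factor below 3/2; so after about
  (4n/(eps d^2)) log d seeds the closure would exceed n/(eps d), which is impossible for a proper
  closed set. If eps d < 2 the trivial bound m(G,2) <= n suffices.

  The spectral hypothesis enters only through x^T A x <= lambda |x|^2 for x orthogonal to the
  constant vector. This follows by maximising the quadratic form on the unit sphere of that
  hyperplane: the maximiser is an eigenvector, and its eigenvalue is one of lambda_2, ..., lambda_n,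
  because an eigenvector for d orthogonal to the constant vector would make d a double root of the
  characteristic polynomial.
*)
theory Submission
  imports Defs
begin

section \<open>Bootstrap closure\<close>

definition boot_closed :: "nat \<Rightarrow> (nat \<Rightarrow> nat \<Rightarrow> bool) \<Rightarrow> nat \<Rightarrow> nat set \<Rightarrow> bool" where
  "boot_closed n E r X \<longleftrightarrow> (\<forall>v<n. r \<le> card (nbrs n E v \<inter> X) \<longrightarrow> v \<in> X)"

lemma finite_nbrs [simp]: "finite (nbrs n E v)"
  by (simp add: nbrs_def)

lemma nbrs_subset: "nbrs n E v \<subseteq> {0..<n}"
  by (auto simp: nbrs_def)

lemma boot_step_iter_mono:
  "i \<le> j \<Longrightarrow> (boot_step n E r ^^ i) S \<subseteq> (boot_step n E r ^^ j) S"
  by (rule lift_Suc_mono_le[of "\<lambda>k. (boot_step n E r ^^ k) S"]) (auto simp: boot_step_def)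

lemma subset_boot_closure: "S \<subseteq> boot_closure n E r S"
  unfolding boot_closure_def by (metis UN_upper UNIV_I funpow_0)

lemma boot_closure_subset_vertices:
  assumes "S \<subseteq> {0..<n}"
  shows "boot_closure n E r S \<subseteq> {0..<n}"
proof -
  have "(boot_step n E r ^^ k) S \<subseteq> {0..<n}" for k
    by (induction k) (use assms in \<open>auto simp: boot_step_def\<close>)
  then show ?thesis
    unfolding boot_closure_def by auto
qed

lemma finite_subset_boot_step_iter:
  "finite F \<Longrightarrow> F \<subseteq> boot_closure n E r S \<Longrightarrow> \<exists>k. F \<subseteq> (boot_step n E r ^^ k) S"
proof (induction F rule: finite_induct)
  case (insert x F)
  then obtain k where k: "F \<subseteq> (boot_step n E r ^^ k) S"
    by blast
  obtain i where i: "x \<in> (boot_step n E r ^^ i) S"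
    using insert.prems unfolding boot_closure_def by blast
  have "(boot_step n E r ^^ i) S \<subseteq> (boot_step n E r ^^ max i k) S"
    "(boot_step n E r ^^ k) S \<subseteq> (boot_step n E r ^^ max i k) S"
    by (simp_all add: boot_step_iter_mono)
  then have "insert x F \<subseteq> (boot_step n E r ^^ max i k) S"
    using i k by blast
  then show ?case ..
qed simp

lemma boot_closed_boot_closure: "boot_closed n E r (boot_closure n E r S)"
  unfolding boot_closed_def
proof (intro allI impI)
  fix v
  assume v: "v < n" and r: "r \<le> card (nbrs n E v \<inter> boot_closure n E r S)"
  have "finite (nbrs n E v \<inter> boot_closure n E r S)"
    by simp
  then obtain k where "nbrs n E v \<inter> boot_closure n E r S \<subseteq> (boot_step n E r ^^ k) S"
    using finite_subset_boot_step_iter by blast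
  then have "nbrs n E v \<inter> boot_closure n E r S \<subseteq> nbrs n E v \<inter> (boot_step n E r ^^ k) S"
    by blast
  then have "card (nbrs n E v \<inter> boot_closure n E r S) \<le> card (nbrs n E v \<inter> (boot_step n E r ^^ k) S)"
    by (intro card_mono) simp_all
  then have "r \<le> card (nbrs n E v \<inter> (boot_step n E r ^^ k) S)"
    using r by linarith
  then have "v \<in> (boot_step n E r ^^ Suc k) S"
    using v by (simp add: boot_step_def)
  then show "v \<in> boot_closure n E r S"
    unfolding boot_closure_def by blast
qed

lemma boot_closure_least:
  assumes closed: "boot_closed n E r X" and "S \<subseteq> X"
  shows "boot_closure n E r S \<subseteq> X"
proof -
  have "(boot_step n E r ^^ k) S \<subseteq> X" for k
  proof (induction k)
    case (Suc k)
    show ?case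
    proof
      fix v
      assume "v \<in> (boot_step n E r ^^ Suc k) S"
      then have "v \<in> (boot_step n E r ^^ k) S \<or> v < n \<and> r \<le> card (nbrs n E v \<inter> (boot_step n E r ^^ k) S)"
        by (simp add: boot_step_def)
      moreover have "card (nbrs n E v \<inter> (boot_step n E r ^^ k) S) \<le> card (nbrs n E v \<inter> X)"
        using Suc.IH by (intro card_mono) auto
      ultimately show "v \<in> X"
        using Suc.IH closed unfolding boot_closed_def by auto
    qed
  qed (use assms in simp)
  then show ?thesis
    unfolding boot_closure_def by blast
qed

lemma contagious_vertices: "contagious n E r {0..<n}"
  using subset_boot_closure boot_closure_subset_vertices
  unfolding contagious_def by blast

lemma min_contagious_le_card: "contagious n E r S \<Longrightarrow> min_contagious n E r \<le> card S"
  unfolding min_contagious_def by (rule Least_le) blast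

lemma two_le_card_nbrs_Int:
  assumes "E v a" "E v b" "a \<noteq> b" "a \<in> Y" "b \<in> Y" "a < n" "b < n"
  shows "2 \<le> card (nbrs n E v \<inter> Y)"
proof -
  have "{a, b} \<subseteq> nbrs n E v \<inter> Y"
    using assms by (auto simp: nbrs_def)
  then have "card {a, b} \<le> card (nbrs n E v \<inter> Y)"
    by (intro card_mono) auto
  then show ?thesis
    using \<open>a \<noteq> b\<close> by simp
qed

section \<open>Counting in graphs\<close>

lemma sum_card_nbrs_Int_swap:
  assumes "simple_graph n E" "X \<subseteq> {0..<n}" "Y \<subseteq> {0..<n}"
  shows "(\<Sum>x\<in>X. card (nbrs n E x \<inter> Y)) = (\<Sum>y\<in>Y. card (nbrs n E y \<inter> X))"
proof -
  have fin: "finite X" "finite Y"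
    using assms(2,3) finite_subset by blast+
  have card_eq: "card (nbrs n E x \<inter> Z) = (\<Sum>z\<in>Z. of_bool (E x z))" if "Z \<subseteq> {0..<n}" "finite Z" for x Z
  proof -
    have "nbrs n E x \<inter> Z = Z \<inter> {z. E x z}"
      using that(1) unfolding nbrs_def by auto
    then show ?thesis
      using that(2) by simp
  qed
  have sym: "E x y = E y x" for x y
    using assms(1) unfolding simple_graph_def by blast
  have "(\<Sum>x\<in>X. card (nbrs n E x \<inter> Y)) = (\<Sum>x\<in>X. \<Sum>y\<in>Y. of_bool (E x y))"
    using card_eq assms(3) fin by simp
  also have "\<dots> = (\<Sum>y\<in>Y. \<Sum>x\<in>X. of_bool (E y x))"
    by (subst sum.swap) (simp add: sym)
  also have "\<dots> = (\<Sum>y\<in>Y. card (nbrs n E y \<inter> X))"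
    using card_eq assms(2) fin by simp
  finally show ?thesis .
qed

lemma C4_free_card_vertices_ge:
  assumes sg: "simple_graph n E" and reg: "regular n E d" and c4: "C4_free E" and n: "0 < n"
  shows "d * (d - 1) + 1 \<le> n"
proof -
  have sym: "E x y \<Longrightarrow> E y x" and irr: "\<not> E x x" for x y
    using sg unfolding simple_graph_def by blast+
  define F where "F = Sigma (nbrs n E 0) (\<lambda>w. nbrs n E w - {0})"
  have "card (nbrs n E w - {0}) = d - 1" if "w \<in> nbrs n E 0" for w
  proof -
    have "0 \<in> nbrs n E w" "w < n"
      using that sym n unfolding nbrs_def by auto
    then show ?thesis
      using reg unfolding regular_def by simp
  qed
  then have "card F = d * (d - 1)"
    using reg n unfolding F_def regular_def by (simp add: card_SigmaI)
  moreover have "inj_on snd F"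
  proof (rule inj_onI)
    fix p q
    assume "p \<in> F" "q \<in> F" "snd p = snd q"
    then obtain w1 w2 x where pq: "p = (w1, x)" "q = (w2, x)" and
      h: "E 0 w1" "E 0 w2" "E w1 x" "E w2 x" "x \<noteq> 0"
      unfolding F_def nbrs_def by auto
    show "p = q"
    proof (rule ccontr)
      assume "p \<noteq> q"
      moreover have "w1 \<noteq> 0" "w2 \<noteq> 0" "w1 \<noteq> x" "w2 \<noteq> x"
        using h irr by metis+
      ultimately have "distinct [0, w1, x, w2]"
        using pq h by auto
      moreover have "E 0 w1 \<and> E w1 x \<and> E x w2 \<and> E w2 0"
        using h sym by blast
      ultimately show False
        using c4 unfolding C4_free_def by blast
    qed
  qed
  moreover have "snd ` F \<subseteq> {0..<n} - {0}"
    unfolding F_def nbrs_def by auto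
  then have "card (snd ` F) \<le> n - 1"
    using card_mono[of "{0..<n} - {0}" "snd ` F"] n by simp
  ultimately show ?thesis
    using n card_image by fastforce
qed

lemma C4_free_sq_degree_le:
  assumes "simple_graph n E" "regular n E d" "C4_free E" "0 < n"
  shows "real d * real d \<le> 2 * real n"
proof -
  have "d * (d - 1) + 1 \<le> n"
    using assms by (rule C4_free_card_vertices_ge)
  then have "real (d * (d - 1) + 1) \<le> real n"
    by (simp only: of_nat_le_iff)
  then have "real d * (real d - 1) + 1 \<le> real n"
    by (cases "d = 0") (simp_all add: of_nat_diff)
  moreover have "0 \<le> (real d - 1)\<^sup>2"
    by simp
  ultimately show ?thesis
    by (simp add: power2_eq_square algebra_simps)
qed

definition vertex_boundary :: "nat \<Rightarrow> (nat \<Rightarrow> nat \<Rightarrow> bool) \<Rightarrow> nat set \<Rightarrow> nat set" where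
  "vertex_boundary n E X = {w \<in> {0..<n} - X. nbrs n E w \<inter> X \<noteq> {}}"

lemma card_nbrs_Int_vertex_boundary:
  assumes "boot_closed n E 2 X" "w \<in> vertex_boundary n E X"
  shows "card (nbrs n E w \<inter> X) = 1"
proof -
  have "w < n" "w \<notin> X" "nbrs n E w \<inter> X \<noteq> {}"
    using assms(2) by (auto simp: vertex_boundary_def)
  then have "card (nbrs n E w \<inter> X) \<noteq> 0" "\<not> 2 \<le> card (nbrs n E w \<inter> X)"
    using assms(1) by (auto simp: boot_closed_def)
  then show ?thesis
    by linarith
qed

lemma card_nbrs_Diff_vertex_boundary:
  assumes "regular n E d" "boot_closed n E 2 X" "w \<in> vertex_boundary n E X"
  shows "card (nbrs n E w - X) = d - 1"
proof -
  have "card (nbrs n E w) = card (nbrs n E w \<inter> X) + card (nbrs n E w - X)"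
    by (rule card_Int_Diff) simp
  moreover have "card (nbrs n E w) = d"
    using assms(1,3) unfolding regular_def vertex_boundary_def by auto
  ultimately show ?thesis
    using card_nbrs_Int_vertex_boundary[OF assms(2,3)] by arith
qed

lemma edge_boundary_eq_card_vertex_boundary:
  assumes sg: "simple_graph n E" and closed: "boot_closed n E 2 X" and X: "X \<subseteq> {0..<n}"
  shows "(\<Sum>v\<in>X. card (nbrs n E v - X)) = card (vertex_boundary n E X)"
proof -
  have B: "vertex_boundary n E X \<subseteq> {0..<n} - X"
    unfolding vertex_boundary_def by auto
  have "nbrs n E v - X = nbrs n E v \<inter> ({0..<n} - X)" for v
    using nbrs_subset[of n E v] by blast
  then have "(\<Sum>v\<in>X. card (nbrs n E v - X)) = (\<Sum>v\<in>X. card (nbrs n E v \<inter> ({0..<n} - X)))"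
    by simp
  also have "\<dots> = (\<Sum>w\<in>{0..<n} - X. card (nbrs n E w \<inter> X))"
    by (rule sum_card_nbrs_Int_swap[OF sg X]) auto
  also have "\<dots> = (\<Sum>w\<in>{0..<n} - X. of_bool (w \<in> vertex_boundary n E X))"
    using card_nbrs_Int_vertex_boundary[OF closed] by (intro sum.cong) (auto simp: vertex_boundary_def)
  also have "\<dots> = card (vertex_boundary n E X)"
    using B by (simp add: Int_absorb1)
  finally show ?thesis .
qed

lemma card_vertex_boundary_le:
  assumes "X \<subseteq> {0..<n}"
  shows "card (vertex_boundary n E X) + card X \<le> n"
proof -
  have "card (vertex_boundary n E X) \<le> card ({0..<n} - X)"
    by (rule card_mono) (auto simp: vertex_boundary_def)
  moreover have "card X \<le> n"
    using card_mono[OF _ assms] by simp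
  ultimately show ?thesis
    using assms by (simp add: card_Diff_subset finite_subset)
qed

lemma exists_vertex_many_vertex_boundary_nbrs:
  assumes sg: "simple_graph n E" and reg: "regular n E d" and closed: "boot_closed n E 2 X"
    and X: "X \<subseteq> {0..<n}" "X \<noteq> {0..<n}"
  shows "\<exists>u\<in>{0..<n} - X.
           real (card (vertex_boundary n E X) * (d - 1)) \<le> real n * card (nbrs n E u \<inter> vertex_boundary n E X)"
proof -
  let ?B = "vertex_boundary n E X" and ?R = "{0..<n} - X"
  let ?g = "\<lambda>u. card (nbrs n E u \<inter> ?B)"
  have "?R \<noteq> {}"
    using X by auto
  then have "Max (?g ` ?R) \<in> ?g ` ?R"
    by (intro Max_in) simp_all
  then obtain u where u: "u \<in> ?R" "?g u = Max (?g ` ?R)"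
    by auto
  have max: "?g v \<le> ?g u" if "v \<in> ?R" for v
    unfolding u(2) using that by (intro Max_ge) simp_all
  have "nbrs n E w \<inter> ?R = nbrs n E w - X" for w
    using nbrs_subset[of n E w] by blast
  then have "card ?B * (d - 1) = (\<Sum>w\<in>?B. card (nbrs n E w \<inter> ?R))"
    using card_nbrs_Diff_vertex_boundary[OF reg closed] by simp
  also have "\<dots> = (\<Sum>v\<in>?R. ?g v)"
    by (rule sum_card_nbrs_Int_swap[OF sg, symmetric]) (auto simp: vertex_boundary_def)
  also have "\<dots> \<le> card ?R * ?g u"
    using sum_bounded_above[of ?R ?g "?g u"] max by simp
  also have "\<dots> \<le> n * ?g u"
    using card_mono[of "{0..<n}" ?R] by (intro mult_right_mono) auto
  finally have "real (card ?B * (d - 1)) \<le> real n * ?g u"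
    by (metis of_nat_le_iff of_nat_mult)
  then show ?thesis
    using u(1) by blast
qed

lemma nbrs_vertex_boundary_subset_boot_closure_insert:
  assumes sg: "simple_graph n E" and S: "S \<subseteq> {0..<n}" and u: "u \<in> {0..<n} - boot_closure n E 2 S"
  shows "nbrs n E u \<inter> vertex_boundary n E (boot_closure n E 2 S) \<subseteq> boot_closure n E 2 (insert u S)"
proof
  let ?X = "boot_closure n E 2 S" and ?Y = "boot_closure n E 2 (insert u S)"
  fix w
  assume "w \<in> nbrs n E u \<inter> vertex_boundary n E ?X"
  then obtain a where "a \<in> ?X" "E w a" "E u w" "w < n"
    unfolding vertex_boundary_def nbrs_def by auto
  moreover have "E w u"
    using sg \<open>E u w\<close> unfolding simple_graph_def by blast
  moreover have "a \<noteq> u"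
    using u \<open>a \<in> ?X\<close> by blast
  moreover have "a < n" "u < n"
    using u \<open>a \<in> ?X\<close> boot_closure_subset_vertices[OF S, of E 2] by auto
  moreover have uY: "insert u S \<subseteq> ?Y"
    by (rule subset_boot_closure)
  moreover have "?X \<subseteq> ?Y"
    using boot_closure_least[OF boot_closed_boot_closure] uY by blast
  ultimately have "2 \<le> card (nbrs n E w \<inter> ?Y)"
    by (intro two_le_card_nbrs_Int[of E w a u]) auto
  then show "w \<in> ?Y"
    using boot_closed_boot_closure \<open>w < n\<close> unfolding boot_closed_def by blast
qed

lemma card_boot_closure_insert:
  assumes sg: "simple_graph n E" and S: "S \<subseteq> {0..<n}" and u: "u \<in> {0..<n} - boot_closure n E 2 S"
  shows "card (boot_closure n E 2 S) + 1 + card (nbrs n E u \<inter> vertex_boundary n E (boot_closure n E 2 S))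
     \<le> card (boot_closure n E 2 (insert u S))"
proof -
  let ?X = "boot_closure n E 2 S" and ?Y = "boot_closure n E 2 (insert u S)"
  let ?W = "nbrs n E u \<inter> vertex_boundary n E ?X"
  have uY: "insert u S \<subseteq> ?Y"
    by (rule subset_boot_closure)
  then have XY: "?X \<subseteq> ?Y"
    using boot_closure_least[OF boot_closed_boot_closure] by blast
  have "insert u S \<subseteq> {0..<n}"
    using S u by blast
  then have "?Y \<subseteq> {0..<n}"
    by (rule boot_closure_subset_vertices)
  then have finY: "finite ?Y"
    by (rule finite_subset) simp
  have "?W \<subseteq> {0..<n} - ?X"
    unfolding vertex_boundary_def by blast
  then have "?X \<inter> insert u ?W = {}"
    using u by blast
  moreover have "finite ?X"
    using XY finY by (rule finite_subset)
  ultimately have "card (?X \<union> insert u ?W) = card ?X + card (insert u ?W)"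
    by (intro card_Un_disjoint) simp_all
  moreover have "u \<notin> nbrs n E u"
    using sg unfolding simple_graph_def nbrs_def by blast
  then have "card (insert u ?W) = card ?W + 1"
    by simp
  moreover have "?X \<union> insert u ?W \<subseteq> ?Y"
    using XY uY nbrs_vertex_boundary_subset_boot_closure_insert[OF sg S u] by blast
  then have "card (?X \<union> insert u ?W) \<le> card ?Y"
    by (rule card_mono[OF finY])
  ultimately show ?thesis
    by simp
qed

section \<open>Quadratic forms and the spectral bound\<close>

definition bilin_form :: "nat \<Rightarrow> (nat \<Rightarrow> nat \<Rightarrow> real) \<Rightarrow> (nat \<Rightarrow> real) \<Rightarrow> (nat \<Rightarrow> real) \<Rightarrow> real" where
  "bilin_form n a x y = (\<Sum>i\<in>{0..<n}. \<Sum>j\<in>{0..<n}. a i j * x i * y j)"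

definition inner_prod :: "nat \<Rightarrow> (nat \<Rightarrow> real) \<Rightarrow> (nat \<Rightarrow> real) \<Rightarrow> real" where
  "inner_prod n x y = (\<Sum>i\<in>{0..<n}. x i * y i)"

lemma bilin_form_commute:
  assumes "\<And>i j. i < n \<Longrightarrow> j < n \<Longrightarrow> a i j = a j i"
  shows "bilin_form n a y x = bilin_form n a x y"
proof -
  have "bilin_form n a y x = (\<Sum>j\<in>{0..<n}. \<Sum>i\<in>{0..<n}. a i j * y i * x j)"
    unfolding bilin_form_def by (rule sum.swap)
  also have "\<dots> = bilin_form n a x y"
    unfolding bilin_form_def by (intro sum.cong refl) (auto simp: assms)
  finally show ?thesis .
qed

lemma bilin_form_add_scaled:
  fixes z w :: "nat \<Rightarrow> real"
  assumes "\<And>i j. i < n \<Longrightarrow> j < n \<Longrightarrow> a i j = a j i"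
  shows "bilin_form n a (\<lambda>i. z i + t * w i) (\<lambda>i. z i + t * w i)
           = bilin_form n a z z + 2 * t * bilin_form n a z w + t\<^sup>2 * bilin_form n a w w"
proof -
  have "bilin_form n a (\<lambda>i. z i + t * w i) (\<lambda>i. z i + t * w i)
      = (\<Sum>i\<in>{0..<n}. \<Sum>j\<in>{0..<n}. a i j * z i * z j + t * (a i j * z i * w j)
           + t * (a i j * w i * z j) + t\<^sup>2 * (a i j * w i * w j))"
    unfolding bilin_form_def by (intro sum.cong refl) (simp add: algebra_simps power2_eq_square)
  also have "\<dots> = bilin_form n a z z + t * bilin_form n a z w + t * bilin_form n a w z
      + t\<^sup>2 * bilin_form n a w w"
    unfolding bilin_form_def by (simp add: sum.distrib sum_distrib_left)
  finally show ?thesis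
    using bilin_form_commute[OF assms, where y = w and x = z] by simp
qed

lemma inner_prod_add_scaled:
  "inner_prod n (\<lambda>i. z i + t * w i) (\<lambda>i. z i + t * w i)
     = inner_prod n z z + 2 * t * inner_prod n z w + t\<^sup>2 * inner_prod n w w"
proof -
  have "inner_prod n (\<lambda>i. z i + t * w i) (\<lambda>i. z i + t * w i)
      = (\<Sum>i\<in>{0..<n}. z i * z i + 2 * t * (z i * w i) + t\<^sup>2 * (w i * w i))"
    unfolding inner_prod_def by (intro sum.cong refl) (simp add: algebra_simps power2_eq_square)
  then show ?thesis
    unfolding inner_prod_def by (simp add: sum.distrib sum_distrib_left)
qed

lemma inner_prod_self_nonneg: "0 \<le> inner_prod n x x"
  unfolding inner_prod_def by (simp add: sum_nonneg)

lemma inner_prod_self_eq_0: "inner_prod n x x = 0 \<Longrightarrow> i < n \<Longrightarrow> x i = 0"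
  unfolding inner_prod_def by (subst (asm) sum_nonneg_eq_0_iff) auto

lemma bilin_form_eq_0:
  assumes "inner_prod n x x = 0"
  shows "bilin_form n a x x = 0"
  using inner_prod_self_eq_0[OF assms] unfolding bilin_form_def by simp

lemma bilin_form_const_right:
  assumes "\<And>i. i < n \<Longrightarrow> (\<Sum>j\<in>{0..<n}. a i j) = c"
  shows "bilin_form n a x (\<lambda>_. 1) = c * (\<Sum>i\<in>{0..<n}. x i)"
proof -
  have "(\<Sum>j\<in>{0..<n}. a i j * x i * 1) = c * x i" if "i \<in> {0..<n}" for i
    using assms that by (simp flip: sum_distrib_right)
  then show ?thesis
    unfolding bilin_form_def by (simp add: sum_distrib_left)
qed

lemma linear_coeff_zero_if_quadratic_nonpos:
  fixes c e :: real
  assumes "\<And>t. 2 * t * c + t\<^sup>2 * e \<le> 0"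
  shows "c = 0"
proof -
  define k where "k = \<bar>e\<bar> + 1"
  have k: "0 < k"
    unfolding k_def by simp
  have "k\<^sup>2 * (2 * (c / k) * c + (c / k)\<^sup>2 * e) \<le> 0"
    using assms[of "c / k"] by (simp add: mult_nonneg_nonpos)
  moreover have "k\<^sup>2 * (2 * (c / k) * c + (c / k)\<^sup>2 * e) = c\<^sup>2 * (2 * k + e)"
    using k by (simp add: field_simps power2_eq_square)
  ultimately have "c\<^sup>2 * (2 * k + e) \<le> 0"
    by linarith
  moreover have "0 < 2 * k + e"
    unfolding k_def by (cases "e \<ge> 0") auto
  ultimately show ?thesis
    by (simp add: mult_le_0_iff)
qed

text \<open>Coordinates from n on are pinned to 0, so that the set is compact in the product topology
  of \<^typ>\<open>nat \<Rightarrow> real\<close>.\<close>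

definition perp_unit_sphere :: "nat \<Rightarrow> (nat \<Rightarrow> real) set" where
  "perp_unit_sphere n = {x \<in> PiE UNIV (\<lambda>i. if i < n then {-1..1} else {0}).
     (\<Sum>i\<in>{0..<n}. x i) = 0 \<and> inner_prod n x x = 1}"

lemma compact_perp_unit_sphere: "compact (perp_unit_sphere n)"
proof -
  let ?box = "PiE UNIV (\<lambda>i::nat. if i < n then {-1..1::real} else {0})"
  have "compactin (product_topology (\<lambda>_. euclidean) UNIV) ?box"
    by (subst compactin_PiE) (auto simp: compactin_euclidean_iff)
  then have "compact ?box"
    by (simp add: euclidean_product_topology compactin_euclidean_iff)
  moreover have "closed {x :: nat \<Rightarrow> real. (\<Sum>i\<in>{0..<n}. x i) = 0}"
    by (intro closed_Collect_eq continuous_intros; simp)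
  moreover have "closed {x :: nat \<Rightarrow> real. inner_prod n x x = 1}"
    unfolding inner_prod_def by (intro closed_Collect_eq continuous_intros; simp)
  moreover have "perp_unit_sphere n =
      ?box \<inter> ({x. (\<Sum>i\<in>{0..<n}. x i) = 0} \<inter> {x. inner_prod n x x = 1})"
    unfolding perp_unit_sphere_def by blast
  ultimately show ?thesis
    by (simp add: compact_Int_closed closed_Int)
qed

lemma normalized_mem_perp_unit_sphere:
  assumes sum: "(\<Sum>i\<in>{0..<n}. w i) = 0" and pos: "0 < inner_prod n w w"
  defines "y \<equiv> (\<lambda>i. if i < n then w i / sqrt (inner_prod n w w) else 0)"
  shows "y \<in> perp_unit_sphere n" "bilin_form n a y y = bilin_form n a w w / inner_prod n w w"
proof -
  let ?s = "sqrt (inner_prod n w w)"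
  have s: "0 < ?s" "?s * ?s = inner_prod n w w"
    using pos by simp_all
  have "w i / ?s \<in> {-1..1}" if "i < n" for i
  proof -
    have "(w i)\<^sup>2 \<le> inner_prod n w w"
      unfolding inner_prod_def power2_eq_square using that by (intro member_le_sum) auto
    then have "\<bar>w i\<bar> \<le> ?s"
      using real_sqrt_le_mono by fastforce
    then show ?thesis
      using s(1) by (auto simp: abs_le_iff divide_le_eq le_divide_eq)
  qed
  then have "y \<in> PiE UNIV (\<lambda>i. if i < n then {-1..1} else {0})"
    unfolding y_def PiE_UNIV_domain by auto
  moreover have "(\<Sum>i\<in>{0..<n}. y i) = 0"
    unfolding y_def using sum by (simp flip: sum_divide_distrib)
  moreover have "inner_prod n y y = 1"
    unfolding y_def inner_prod_def using s pos
    by (simp add: sum_divide_distrib[symmetric] inner_prod_def[symmetric])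
  ultimately show "y \<in> perp_unit_sphere n"
    unfolding perp_unit_sphere_def by blast
  have "bilin_form n a y y = (\<Sum>i\<in>{0..<n}. \<Sum>j\<in>{0..<n}. a i j * w i * w j / (?s * ?s))"
    unfolding bilin_form_def y_def by (intro sum.cong) auto
  then show "bilin_form n a y y = bilin_form n a w w / inner_prod n w w"
    unfolding bilin_form_def s(2) by (simp add: sum_divide_distrib)
qed

lemma exists_max_quad_form_perp:
  assumes sum: "(\<Sum>i\<in>{0..<n}. x i) = 0" and pos: "0 < inner_prod n x x"
  shows "\<exists>z. (\<Sum>i\<in>{0..<n}. z i) = 0 \<and> inner_prod n z z = 1 \<and>
           (\<forall>w. (\<Sum>i\<in>{0..<n}. w i) = 0 \<longrightarrow> bilin_form n a w w \<le> bilin_form n a z z * inner_prod n w w)"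
proof -
  have "continuous_on UNIV (\<lambda>y. bilin_form n a y y)"
    unfolding bilin_form_def by (intro continuous_intros; simp)
  then have "continuous_on (perp_unit_sphere n) (\<lambda>y. bilin_form n a y y)"
    by (rule continuous_on_subset) simp
  moreover have "perp_unit_sphere n \<noteq> {}"
    using normalized_mem_perp_unit_sphere(1)[OF sum pos] by blast
  ultimately obtain z where z: "z \<in> perp_unit_sphere n"
    and max: "\<And>y. y \<in> perp_unit_sphere n \<Longrightarrow> bilin_form n a y y \<le> bilin_form n a z z"
    using continuous_attains_sup[OF compact_perp_unit_sphere] by blast
  have "bilin_form n a w w \<le> bilin_form n a z z * inner_prod n w w"
    if w: "(\<Sum>i\<in>{0..<n}. w i) = 0" for w
  proof (cases "inner_prod n w w = 0")
    case True
    then show ?thesis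
      using bilin_form_eq_0 by simp
  next
    case False
    then have pos: "0 < inner_prod n w w"
      using inner_prod_self_nonneg[of n w] by simp
    have "bilin_form n a w w / inner_prod n w w \<le> bilin_form n a z z"
      using max[OF normalized_mem_perp_unit_sphere(1)[OF w pos]]
      unfolding normalized_mem_perp_unit_sphere(2)[OF w pos] .
    then show ?thesis
      using pos by (simp add: divide_le_eq)
  qed
  then show ?thesis
    using z unfolding perp_unit_sphere_def by blast
qed

lemma max_quad_form_perp_first_order:
  assumes sym: "\<And>i j. i < n \<Longrightarrow> j < n \<Longrightarrow> a i j = a j i"
    and z: "(\<Sum>i\<in>{0..<n}. z i) = 0" "inner_prod n z z = 1"
    and max: "\<And>w. (\<Sum>i\<in>{0..<n}. w i) = 0 \<Longrightarrow> bilin_form n a w w \<le> bilin_form n a z z * inner_prod n w w"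
    and w: "(\<Sum>i\<in>{0..<n}. w i) = 0"
  shows "bilin_form n a z w = bilin_form n a z z * inner_prod n z w"
proof -
  let ?\<mu> = "bilin_form n a z z"
  have "2 * t * (bilin_form n a z w - ?\<mu> * inner_prod n z w) + t\<^sup>2 * (bilin_form n a w w - ?\<mu> * inner_prod n w w) \<le> 0"
    for t
  proof -
    have "(\<Sum>i\<in>{0..<n}. z i + t * w i) = 0"
      using z w by (simp add: sum.distrib flip: sum_distrib_left)
    then have "bilin_form n a (\<lambda>i. z i + t * w i) (\<lambda>i. z i + t * w i)
        \<le> ?\<mu> * inner_prod n (\<lambda>i. z i + t * w i) (\<lambda>i. z i + t * w i)"
      by (rule max)
    moreover have "bilin_form n a (\<lambda>i. z i + t * w i) (\<lambda>i. z i + t * w i)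
        = ?\<mu> + 2 * t * bilin_form n a z w + t\<^sup>2 * bilin_form n a w w"
      by (rule bilin_form_add_scaled[OF sym])
    moreover have "inner_prod n (\<lambda>i. z i + t * w i) (\<lambda>i. z i + t * w i)
        = 1 + 2 * t * inner_prod n z w + t\<^sup>2 * inner_prod n w w"
      using inner_prod_add_scaled z(2) by simp
    ultimately have "?\<mu> + 2 * t * bilin_form n a z w + t\<^sup>2 * bilin_form n a w w
        \<le> ?\<mu> * (1 + 2 * t * inner_prod n z w + t\<^sup>2 * inner_prod n w w)"
      by simp
    then show ?thesis
      by (simp add: algebra_simps)
  qed
  then show ?thesis
    using linear_coeff_zero_if_quadratic_nonpos by fastforce
qed

lemma max_quad_form_perp_eigenvector:
  assumes sym: "\<And>i j. i < n \<Longrightarrow> j < n \<Longrightarrow> a i j = a j i"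
    and rows: "\<And>i. i < n \<Longrightarrow> (\<Sum>j\<in>{0..<n}. a i j) = c"
    and z: "(\<Sum>i\<in>{0..<n}. z i) = 0" "inner_prod n z z = 1"
    and max: "\<And>w. (\<Sum>i\<in>{0..<n}. w i) = 0 \<Longrightarrow> bilin_form n a w w \<le> bilin_form n a z z * inner_prod n w w"
    and i: "i < n"
  shows "(\<Sum>j\<in>{0..<n}. a i j * z j) = bilin_form n a z z * z i"
proof -
  let ?\<mu> = "bilin_form n a z z"
  define w where "w = (\<lambda>i. (\<Sum>j\<in>{0..<n}. a i j * z j) - ?\<mu> * z i)"
  have Az: "(\<Sum>j\<in>{0..<n}. a i j * z j) = w i + ?\<mu> * z i" for i
    unfolding w_def by simp
  have "(\<Sum>i\<in>{0..<n}. \<Sum>j\<in>{0..<n}. a i j * z j) = (\<Sum>j\<in>{0..<n}. c * z j)"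
    by (subst sum.swap) (auto simp: rows sym simp flip: sum_distrib_right intro!: sum.cong)
  then have w_sum: "(\<Sum>i\<in>{0..<n}. w i) = 0"
    unfolding w_def using z(1) by (simp add: sum_subtractf flip: sum_distrib_left)
  have "bilin_form n a z w = (\<Sum>j\<in>{0..<n}. (\<Sum>i\<in>{0..<n}. a j i * z i) * w j)"
    unfolding bilin_form_def by (subst sum.swap) (auto simp: sym sum_distrib_right intro!: sum.cong)
  also have "\<dots> = inner_prod n w w + ?\<mu> * inner_prod n z w"
    unfolding Az inner_prod_def by (simp add: algebra_simps sum.distrib sum_distrib_left)
  finally have "inner_prod n w w = 0"
    using max_quad_form_perp_first_order[OF sym z max w_sum] by simp
  then show ?thesis
    using Az inner_prod_self_eq_0 i by simp
qed

lemma quad_form_perp_le: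
  assumes sym: "\<And>i j. i < n \<Longrightarrow> j < n \<Longrightarrow> a i j = a j i"
    and rows: "\<And>i. i < n \<Longrightarrow> (\<Sum>j\<in>{0..<n}. a i j) = c"
    and eig: "\<And>z \<mu>. (\<And>i. i < n \<Longrightarrow> (\<Sum>j\<in>{0..<n}. a i j * z j) = \<mu> * z i) \<Longrightarrow>
               (\<Sum>i\<in>{0..<n}. z i) = 0 \<Longrightarrow> (\<exists>i<n. z i \<noteq> 0) \<Longrightarrow> \<mu> \<le> lam"
    and x: "(\<Sum>i\<in>{0..<n}. x i) = 0"
  shows "bilin_form n a x x \<le> lam * inner_prod n x x"
proof (cases "inner_prod n x x = 0")
  case True
  then show ?thesis
    using bilin_form_eq_0 by simp
next
  case False
  then have "0 < inner_prod n x x"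
    using inner_prod_self_nonneg[of n x] by simp
  then obtain z where z: "(\<Sum>i\<in>{0..<n}. z i) = 0" "inner_prod n z z = 1"
    and max: "\<And>w. (\<Sum>i\<in>{0..<n}. w i) = 0 \<Longrightarrow> bilin_form n a w w \<le> bilin_form n a z z * inner_prod n w w"
    using exists_max_quad_form_perp[OF x] by blast
  have "\<exists>i<n. z i \<noteq> 0"
  proof (rule ccontr)
    assume "\<not> ?thesis"
    then have "inner_prod n z z = 0"
      unfolding inner_prod_def by (intro sum.neutral) auto
    then show False
      using z(2) by simp
  qed
  then have "bilin_form n a z z \<le> lam"
    using eig[OF max_quad_form_perp_eigenvector[OF sym rows z max] z(1)] by blast
  then have "bilin_form n a z z * inner_prod n x x \<le> lam * inner_prod n x x"
    by (simp add: inner_prod_self_nonneg mult_right_mono)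
  then show ?thesis
    using max[OF x] by linarith
qed

lemma poly_char_poly_eigenvector:
  fixes a :: "nat \<Rightarrow> nat \<Rightarrow> real"
  assumes eig: "\<And>i. i < n \<Longrightarrow> (\<Sum>j\<in>{0..<n}. a i j * y j) = \<mu> * y i" and nz: "\<exists>i<n. y i \<noteq> 0"
  shows "poly (char_poly (mat n n (\<lambda>(i, j). a i j))) \<mu> = 0"
proof -
  let ?M = "mat n n (\<lambda>(i, j). a i j)"
  have "eigenvector ?M (vec n y) \<mu>"
    unfolding eigenvector_def
  proof (intro conjI)
    show "vec n y \<in> carrier_vec (dim_row ?M)"
      by simp
    show "vec n y \<noteq> 0\<^sub>v (dim_row ?M)"
      using nz by (metis dim_row_mat(1) index_vec index_zero_vec(1))
    show "?M *\<^sub>v vec n y = \<mu> \<cdot>\<^sub>v vec n y"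
      by (rule eq_vecI) (auto simp: scalar_prod_def eig)
  qed
  then have "eigenvalue ?M \<mu>"
    unfolding eigenvalue_def by blast
  then show ?thesis
    using eigenvalue_root_char_poly[of ?M n] by simp
qed

lemma poly_char_poly_principal_minor:
  fixes a :: "nat \<Rightarrow> nat \<Rightarrow> real"
  assumes i: "i < n"
    and eig: "\<And>k. k < n \<Longrightarrow> (\<Sum>j\<in>{0..<n}. a k j * y j) = \<mu> * y k"
    and yi: "y i = 0" and nz: "\<exists>j<n. y j \<noteq> 0"
  shows "poly (char_poly (mat_delete (mat n n (\<lambda>(k, l). a k l)) i i)) \<mu> = 0"
proof -
  obtain m where nm: "n = Suc m"
    using i by (cases n) auto
  let ?ins = "insert_index i"
  have minor: "mat_delete (mat n n (\<lambda>(k, l). a k l)) i i = mat m m (\<lambda>(k, l). a (?ins k) (?ins l))"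
    unfolding mat_delete_def nm by (rule eq_matI) (auto simp: insert_index_def)
  have img: "?ins ` {0..<m} = {0..<n} - {i}"
    using insert_index_image[of i m] i nm by simp
  have "(\<Sum>l\<in>{0..<m}. a (?ins k) (?ins l) * y (?ins l)) = \<mu> * y (?ins k)" if "k < m" for k
  proof -
    have "(\<Sum>l\<in>{0..<m}. a (?ins k) (?ins l) * y (?ins l)) = (\<Sum>j\<in>{0..<n} - {i}. a (?ins k) j * y j)"
      using sum.reindex[OF insert_index_inj_on, of "\<lambda>j. a (?ins k) j * y j" i "{0..<m}"] img by simp
    also have "\<dots> = (\<Sum>j\<in>{0..<n}. a (?ins k) j * y j)"
      using i yi by (simp add: sum_diff1)
    also have "\<dots> = \<mu> * y (?ins k)"
      using that nm by (intro eig) (simp add: insert_index_def)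
    finally show ?thesis .
  qed
  moreover have "\<exists>k<m. y (?ins k) \<noteq> 0"
  proof -
    obtain j where j: "j < n" "y j \<noteq> 0"
      using nz by blast
    then have "j \<noteq> i"
      using yi by auto
    then show ?thesis
      using j nm i insert_delete_index[of j i] by (intro exI[of _ "delete_index i j"]) (auto simp: delete_index_def)
  qed
  ultimately show ?thesis
    unfolding minor by (rule poly_char_poly_eigenvector)
qed

lemma poly_char_poly_principal_minor_const_rows:
  fixes a :: "nat \<Rightarrow> nat \<Rightarrow> real"
  assumes rows: "\<And>k. k < n \<Longrightarrow> (\<Sum>j\<in>{0..<n}. a k j) = c"
    and eig: "\<And>k. k < n \<Longrightarrow> (\<Sum>j\<in>{0..<n}. a k j * z j) = c * z k"
    and sum: "(\<Sum>k\<in>{0..<n}. z k) = 0" and nz: "\<exists>k<n. z k \<noteq> 0" and i: "i < n"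
  shows "poly (char_poly (mat_delete (mat n n (\<lambda>(k, l). a k l)) i i)) c = 0"
proof (rule poly_char_poly_principal_minor[OF i, of a "\<lambda>j. z j - z i"])
  \<comment> \<open>the constant vector is an eigenvector for c, hence so is z - z i, which vanishes at i\<close>
  show "(\<Sum>j\<in>{0..<n}. a k j * (z j - z i)) = c * (z k - z i)" if "k < n" for k
  proof -
    have "(\<Sum>j\<in>{0..<n}. a k j * (z j - z i)) = (\<Sum>j\<in>{0..<n}. a k j * z j) - (\<Sum>j\<in>{0..<n}. a k j) * z i"
      by (simp add: right_diff_distrib sum_subtractf sum_distrib_right)
    then show ?thesis
      using eig[OF that] rows[OF that] by (simp add: right_diff_distrib)
  qed
  show "\<exists>j<n. z j - z i \<noteq> 0"
  proof (rule ccontr)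
    assume "\<not> ?thesis"
    then have const: "z j = z i" if "j \<in> {0..<n}" for j
      using that by auto
    have "(\<Sum>j\<in>{0..<n}. z j) = (\<Sum>j\<in>{0..<n}. z i)"
      by (rule sum.cong[OF refl const])
    then have "z i = 0"
      using sum i by simp
    obtain k where "k < n" "z k \<noteq> 0"
      using nz by blast
    then show False
      using const[of k] \<open>z i = 0\<close> by simp
  qed
qed simp

text \<open>Instead of comparing geometric and algebraic multiplicity, we show that c is a root of the
  derivative of the characteristic polynomial, which is the sum of the characteristic polynomials
  of the principal minors.\<close>

lemma order_char_poly_ge_two:
  fixes a :: "nat \<Rightarrow> nat \<Rightarrow> real"
  assumes rows: "\<And>k. k < n \<Longrightarrow> (\<Sum>j\<in>{0..<n}. a k j) = c"
    and eig: "\<And>k. k < n \<Longrightarrow> (\<Sum>j\<in>{0..<n}. a k j * z j) = c * z k"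
    and sum: "(\<Sum>k\<in>{0..<n}. z k) = 0" and nz: "\<exists>k<n. z k \<noteq> 0"
  shows "2 \<le> order c (char_poly (mat n n (\<lambda>(k, l). a k l)))"
proof -
  let ?M = "mat n n (\<lambda>(k, l). a k l)"
  let ?p = "char_poly ?M"
  have M: "?M \<in> carrier_mat n n"
    by simp
  have root: "poly ?p c = 0"
    by (rule poly_char_poly_eigenvector[OF eig nz])
  have p_nz: "?p \<noteq> 0"
    using degree_monic_char_poly[OF M] by auto
  have "poly (pderiv ?p) c = 0"
    unfolding pderiv_char_poly[OF M] poly_sum
    using poly_char_poly_principal_minor_const_rows[OF rows eig sum nz] by simp
  moreover have "pderiv ?p \<noteq> 0"
  proof
    assume "pderiv ?p = 0"
    then obtain h where "?p = [:h:]"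
      using pderiv_iszero by blast
    then show False
      using root p_nz by simp
  qed
  ultimately have "order c (pderiv ?p) \<noteq> 0"
    using order_root by blast
  then show ?thesis
    using order_pderiv[OF p_nz root] by simp
qed

definition adj_entry :: "(nat \<Rightarrow> nat \<Rightarrow> bool) \<Rightarrow> nat \<Rightarrow> nat \<Rightarrow> real" where
  "adj_entry E i j = of_bool (E i j)"

lemma adj_mat_eq: "adj_mat n E = mat n n (\<lambda>(i, j). adj_entry E i j)"
  unfolding adj_mat_def adj_entry_def by (rule eq_matI) auto

lemma adj_entry_commute: "simple_graph n E \<Longrightarrow> adj_entry E i j = adj_entry E j i"
  unfolding simple_graph_def adj_entry_def by (cases "E i j") auto

lemma sum_adj_entry:
  assumes "B \<subseteq> {0..<n}"
  shows "(\<Sum>j\<in>B. adj_entry E i j) = real (card (nbrs n E i \<inter> B))"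
proof -
  have "nbrs n E i \<inter> B = B \<inter> {j. E i j}"
    using assms unfolding nbrs_def by auto
  then show ?thesis
    using assms finite_subset unfolding adj_entry_def by fastforce
qed

lemma sum_adj_entry_row:
  "regular n E d \<Longrightarrow> i < n \<Longrightarrow> (\<Sum>j\<in>{0..<n}. adj_entry E i j) = real d"
  using sum_adj_entry[of "{0..<n}" n E i] nbrs_subset[of n E i]
  unfolding regular_def by (simp add: Int_absorb2)

lemma adj_eigenvalue_perp_in_spectrum:
  assumes reg: "regular n E d"
    and eig: "\<And>i. i < n \<Longrightarrow> (\<Sum>j\<in>{0..<n}. adj_entry E i j * z j) = \<mu> * z i"
    and sum: "(\<Sum>i\<in>{0..<n}. z i) = 0" and nz: "\<exists>i<n. z i \<noteq> 0"
  shows "\<mu> \<in># adj_spectrum n E - {#real d#}"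
proof -
  let ?p = "char_poly (adj_mat n E)"
  have "adj_mat n E \<in> carrier_mat n n"
    unfolding adj_mat_def by simp
  then have p_nz: "?p \<noteq> 0"
    using degree_monic_char_poly[of "adj_mat n E" n] by auto
  moreover have "count {#real d#} \<mu> < order \<mu> ?p"
  proof (cases "\<mu> = real d")
    case True
    have "2 \<le> order (real d) (char_poly (mat n n (\<lambda>(k, l). adj_entry E k l)))"
    proof (rule order_char_poly_ge_two[where a = "adj_entry E" and c = "real d", OF _ _ sum nz])
      show "(\<Sum>j\<in>{0..<n}. adj_entry E k j) = real d" if "k < n" for k
        using sum_adj_entry_row[OF reg that] .
      show "(\<Sum>j\<in>{0..<n}. adj_entry E k j * z j) = real d * z k" if "k < n" for k
        using eig[OF that] True by simp
    qed
    then show ?thesis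
      using True unfolding adj_mat_eq by simp
  next
    case False
    have "poly ?p \<mu> = 0"
      unfolding adj_mat_eq by (rule poly_char_poly_eigenvector[OF eig nz])
    then have "order \<mu> ?p \<noteq> 0"
      using p_nz order_root by blast
    then show ?thesis
      using False by simp
  qed
  ultimately show ?thesis
    unfolding adj_spectrum_def by (simp add: in_diff_count)
qed

lemma ndl_graph_vertices_pos:
  assumes "ndl_graph n d lam E"
  shows "0 < n"
proof (rule ccontr)
  let ?p = "char_poly (adj_mat n E)"
  assume "\<not> 0 < n"
  moreover have "adj_mat n E \<in> carrier_mat n n"
    unfolding adj_mat_def by simp
  ultimately have "degree ?p = 0" "coeff ?p 0 = 1"
    using degree_monic_char_poly[of "adj_mat n E" n] by auto
  then have "?p = [:1:]"
    using degree_0_id[of ?p] by simp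
  moreover have "real d \<in># proots ?p"
    using assms unfolding ndl_graph_def adj_spectrum_def by simp
  ultimately show False
    by (simp add: set_count_proots)
qed

locale spectral_expander =
  fixes n :: nat and E :: "nat \<Rightarrow> nat \<Rightarrow> bool" and d :: nat and lam :: real
  assumes simple: "simple_graph n E" and regular: "regular n E d" and vertices_pos: "0 < n"
    and quad_form_le:
      "\<And>x. (\<Sum>i\<in>{0..<n}. x i) = 0 \<Longrightarrow> bilin_form n (adj_entry E) x x \<le> lam * inner_prod n x x"

lemma spectral_expander_mono:
  assumes "spectral_expander n E d lam" "lam \<le> lam'"
  shows "spectral_expander n E d lam'"
proof -
  interpret spectral_expander n E d lam
    by fact
  show ?thesis
  proof (rule spectral_expander.intro[OF simple regular vertices_pos])
    fix x :: "nat \<Rightarrow> real"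
    assume "(\<Sum>i\<in>{0..<n}. x i) = 0"
    then have "bilin_form n (adj_entry E) x x \<le> lam * inner_prod n x x"
      by (rule quad_form_le)
    also have "\<dots> \<le> lam' * inner_prod n x x"
      using assms(2) inner_prod_self_nonneg by (rule mult_right_mono)
    finally show "bilin_form n (adj_entry E) x x \<le> lam' * inner_prod n x x" .
  qed
qed

lemma ndl_graph_spectral_expander:
  assumes ndl: "ndl_graph n d lam E"
  shows "spectral_expander n E d lam"
proof (rule spectral_expander.intro)
  show sg: "simple_graph n E" and reg: "regular n E d" and "0 < n"
    using ndl ndl_graph_vertices_pos unfolding ndl_graph_def by auto
  have sym: "adj_entry E i j = adj_entry E j i" for i j
    using sg by (rule adj_entry_commute)
  have "\<mu> \<le> lam" if "\<And>i. i < n \<Longrightarrow> (\<Sum>j\<in>{0..<n}. adj_entry E i j * z j) = \<mu> * z i"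
    "(\<Sum>i\<in>{0..<n}. z i) = 0" "\<exists>i<n. z i \<noteq> 0" for z \<mu>
    using ndl adj_eigenvalue_perp_in_spectrum[OF reg that] unfolding ndl_graph_def by fastforce
  then show "bilin_form n (adj_entry E) x x \<le> lam * inner_prod n x x"
    if "(\<Sum>i\<in>{0..<n}. x i) = 0" for x
    using quad_form_perp_le[OF sym sum_adj_entry_row[OF reg] _ that] by blast
qed

section \<open>Growth of the closure in an expander\<close>

lemma bilin_form_adj_indicator:
  assumes reg: "regular n E d" and A: "A \<subseteq> {0..<n}"
  shows "bilin_form n (adj_entry E) (\<lambda>i. of_bool (i \<in> A)) (\<lambda>i. of_bool (i \<in> A))
           = real d * card A - real (\<Sum>v\<in>A. card (nbrs n E v - A))"
proof -
  have "bilin_form n (adj_entry E) (\<lambda>i. of_bool (i \<in> A)) (\<lambda>i. of_bool (i \<in> A))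
      = (\<Sum>i\<in>A. \<Sum>j\<in>A. adj_entry E i j)"
    unfolding bilin_form_def using A
    by (simp add: mult.commute[of _ "of_bool _"] mult.assoc sum_distrib_left[symmetric] Int_absorb1)
  also have "\<dots> = (\<Sum>i\<in>A. real d - real (card (nbrs n E i - A)))"
  proof (intro sum.cong refl)
    fix i
    assume "i \<in> A"
    then have "card (nbrs n E i) = d"
      using A reg unfolding regular_def by auto
    moreover have "card (nbrs n E i) = card (nbrs n E i \<inter> A) + card (nbrs n E i - A)"
      by (rule card_Int_Diff) simp
    ultimately have "real d = real (card (nbrs n E i \<inter> A)) + real (card (nbrs n E i - A))"
      by (metis of_nat_add)
    then show "(\<Sum>j\<in>A. adj_entry E i j) = real d - real (card (nbrs n E i - A))"
      using sum_adj_entry[OF A, of E i] by linarith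
  qed
  also have "\<dots> = real d * card A - real (\<Sum>v\<in>A. card (nbrs n E v - A))"
    by (simp add: sum_subtractf)
  finally show ?thesis .
qed

context spectral_expander
begin

text \<open>Evaluate the spectral bound at the indicator of A minus its mean.\<close>

lemma edge_boundary_ge:
  assumes A: "A \<subseteq> {0..<n}"
  shows "(real d - lam) * card A * (real n - card A) \<le> real n * (\<Sum>v\<in>A. card (nbrs n E v - A))"
proof -
  define s where "s = real (card A)"
  define e where "e = real (\<Sum>v\<in>A. card (nbrs n E v - A))"
  define c where "c = s / real n"
  let ?a = "adj_entry E" and ?z = "\<lambda>i. of_bool (i \<in> A) :: real" and ?one = "\<lambda>_::nat. 1::real"
  let ?x = "\<lambda>i. ?z i + (- c) * ?one i"
  have cn: "c * real n = s"
    unfolding c_def using vertices_pos by simp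
  have sym: "?a i j = ?a j i" for i j
    using simple by (rule adj_entry_commute)
  have rows: "\<And>i. i < n \<Longrightarrow> (\<Sum>j\<in>{0..<n}. ?a i j) = real d"
    using sum_adj_entry_row[OF regular] .
  have z_sum: "(\<Sum>i\<in>{0..<n}. ?z i) = s"
    unfolding s_def using A by (simp add: Int_absorb1)
  have "bilin_form n ?a ?z ?one = real d * s"
    using bilin_form_const_right[OF rows, where x = ?z] z_sum by simp
  moreover have "bilin_form n ?a ?one ?one = real d * real n"
    using bilin_form_const_right[OF rows, where x = ?one] by simp
  moreover have "bilin_form n ?a ?z ?z = real d * s - e"
    unfolding s_def e_def by (rule bilin_form_adj_indicator[OF regular A])
  ultimately have Qx: "bilin_form n ?a ?x ?x = real d * s - e - 2 * c * (real d * s) + c\<^sup>2 * (real d * real n)"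
    using bilin_form_add_scaled[OF sym, where z = ?z and t = "- c" and w = ?one] by simp
  have "inner_prod n ?z ?z = s" "inner_prod n ?z ?one = s" "inner_prod n ?one ?one = real n"
    unfolding inner_prod_def using z_sum by simp_all
  then have Nx: "inner_prod n ?x ?x = s - 2 * c * s + c\<^sup>2 * real n"
    using inner_prod_add_scaled[where z = ?z and t = "- c" and w = ?one] by simp
  have "(\<Sum>i\<in>{0..<n}. ?x i) = 0"
    using z_sum cn by (simp add: sum_subtractf mult.commute)
  then have "bilin_form n ?a ?x ?x \<le> lam * inner_prod n ?x ?x"
    by (rule quad_form_le)
  then have "real d * s - e - 2 * c * (real d * s) + c\<^sup>2 * (real d * real n)
      \<le> lam * (s - 2 * c * s + c\<^sup>2 * real n)"
    unfolding Qx Nx .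
  moreover have "c\<^sup>2 * (real d * real n) = c * (s * real d)" "c\<^sup>2 * real n = c * s"
    unfolding cn[symmetric] power2_eq_square by (simp_all add: mult_ac)
  ultimately have "s * real d - e - c * (s * real d) \<le> lam * (s - c * s)"
    by (simp add: algebra_simps)
  then have "real n * (s * real d - e - c * (s * real d)) \<le> real n * (lam * (s - c * s))"
    by (intro mult_left_mono) auto
  then have "real n * s * real d - real n * e - (c * real n) * s * real d
      \<le> lam * (real n * s - (c * real n) * s)"
    by (simp add: algebra_simps)
  then have "real n * s * real d - real n * e - s * s * real d \<le> lam * (real n * s - s * s)"
    unfolding cn .
  then show ?thesis
    unfolding s_def[symmetric] e_def[symmetric] by (simp add: algebra_simps)
qed

lemma card_vertex_boundary_expansion:
  assumes "boot_closed n E 2 X" "X \<subseteq> {0..<n}"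
  shows "(real d - lam) * card X * (real n - card X) \<le> real n * card (vertex_boundary n E X)"
  using edge_boundary_ge[OF assms(2)] edge_boundary_eq_card_vertex_boundary[OF simple assms] by simp

lemma closed_card_le:
  assumes closed: "boot_closed n E 2 X" and X: "X \<subseteq> {0..<n}" "X \<noteq> {0..<n}"
  shows "(real d - lam) * card X \<le> real n"
proof -
  have "card X < n"
    using X psubset_card_mono[of "{0..<n}" X] by auto
  moreover have "card (vertex_boundary n E X) + card X \<le> n"
    using X(1) by (rule card_vertex_boundary_le)
  then have "real n * card (vertex_boundary n E X) \<le> real n * (real n - card X)"
    by (intro mult_left_mono) (simp_all flip: of_nat_add)
  then have "(real d - lam) * card X * (real n - card X) \<le> real n * (real n - card X)"
    using card_vertex_boundary_expansion[OF closed X(1)] by linarith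
  ultimately show ?thesis
    by (simp add: mult_le_cancel_right)
qed

lemma closed_card_vertex_boundary_ge:
  assumes closed: "boot_closed n E 2 X" and X: "X \<subseteq> {0..<n}" "X \<noteq> {0..<n}"
    and gap: "2 \<le> real d - lam"
  shows "(real d - lam) * card X \<le> 2 * card (vertex_boundary n E X)"
proof -
  have "2 * real (card X) \<le> (real d - lam) * card X"
    using gap by (intro mult_right_mono) auto
  also have "\<dots> \<le> real n"
    by (rule closed_card_le[OF closed X])
  finally have "real n \<le> 2 * (real n - card X)"
    by (simp add: algebra_simps)
  then have "(real d - lam) * card X * real n \<le> (real d - lam) * card X * (2 * (real n - card X))"
    using gap by (intro mult_left_mono) auto
  also have "\<dots> = 2 * ((real d - lam) * card X * (real n - card X))"
    by simp
  also have "\<dots> \<le> 2 * (real n * card (vertex_boundary n E X))"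
    using card_vertex_boundary_expansion[OF closed X(1)] by simp
  also have "\<dots> = 2 * card (vertex_boundary n E X) * real n"
    by simp
  finally show ?thesis
    using vertices_pos by (simp add: mult_le_cancel_right_pos)
qed

definition growth_rate :: real where
  "growth_rate = (real d - lam) * real d / (4 * real n)"

lemma growth_rate_mult_closed_card_le:
  assumes "boot_closed n E 2 X" "X \<subseteq> {0..<n}" "X \<noteq> {0..<n}"
  shows "growth_rate * card X \<le> real d / 4"
proof -
  have "growth_rate * card X = (real d - lam) * card X * real d / (4 * real n)"
    unfolding growth_rate_def by simp
  also have "\<dots> \<le> real n * real d / (4 * real n)"
    using closed_card_le[OF assms] by (intro divide_right_mono mult_right_mono) auto
  also have "\<dots> = real d / 4"
    using vertices_pos by simp
  finally show ?thesis .
qed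

lemma closure_growth_step:
  assumes S: "S \<subseteq> {0..<n}" and proper: "boot_closure n E 2 S \<noteq> {0..<n}"
    and d: "2 \<le> d" and gap: "2 \<le> real d - lam"
  shows "\<exists>u\<in>{0..<n} - boot_closure n E 2 S.
           (1 + growth_rate) * card (boot_closure n E 2 S) + 1 \<le> card (boot_closure n E 2 (insert u S))"
proof -
  let ?X = "boot_closure n E 2 S"
  let ?B = "vertex_boundary n E ?X"
  have closed: "boot_closed n E 2 ?X" and X: "?X \<subseteq> {0..<n}"
    using boot_closed_boot_closure boot_closure_subset_vertices[OF S] .
  obtain u where u: "u \<in> {0..<n} - ?X"
    and many: "real (card ?B * (d - 1)) \<le> real n * card (nbrs n E u \<inter> ?B)"
    using exists_vertex_many_vertex_boundary_nbrs[OF simple regular closed X proper] by blast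
  have "(real d - lam) * card ?X * real d \<le> 2 * card ?B * real d"
    using closed_card_vertex_boundary_ge[OF closed X proper gap] by (simp add: mult_right_mono)
  also have "\<dots> = real (card ?B) * (2 * real d)"
    by simp
  also have "\<dots> \<le> real (card ?B) * (4 * (real d - 1))"
    using d by (intro mult_left_mono) auto
  also have "\<dots> = 4 * real (card ?B * (d - 1))"
    using d by (simp add: of_nat_diff)
  also have "\<dots> \<le> 4 * real n * card (nbrs n E u \<inter> ?B)"
    using many by simp
  finally have "growth_rate * card ?X \<le> card (nbrs n E u \<inter> ?B)"
    unfolding growth_rate_def using vertices_pos by (simp add: field_simps)
  then show ?thesis
    using card_boot_closure_insert[OF simple S u] u by (intro bexI[of _ u]) (simp_all add: algebra_simps)
qed

lemma closure_growth:
  assumes d: "2 \<le> d" and gap: "2 \<le> real d - lam"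
  shows "\<exists>S\<subseteq>{0..<n}. card S \<le> k \<and> (boot_closure n E 2 S = {0..<n} \<or>
           ((1 + growth_rate) ^ k - 1) / growth_rate \<le> card (boot_closure n E 2 S))"
proof (induction k)
  case 0
  show ?case
    by (intro exI[of _ "{}"]) simp
next
  case (Suc k)
  let ?\<alpha> = growth_rate
  have \<alpha>: "0 < ?\<alpha>"
    unfolding growth_rate_def using gap d vertices_pos by simp
  from Suc.IH obtain S where S: "S \<subseteq> {0..<n}" "card S \<le> k"
    and alt: "boot_closure n E 2 S = {0..<n} \<or> ((1 + ?\<alpha>) ^ k - 1) / ?\<alpha> \<le> card (boot_closure n E 2 S)"
    by blast
  show ?case
  proof (cases "boot_closure n E 2 S = {0..<n}")
    case True
    then show ?thesis
      using S by (intro exI[of _ S]) auto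
  next
    case False
    then obtain u where u: "u \<in> {0..<n} - boot_closure n E 2 S"
      and grow: "(1 + ?\<alpha>) * card (boot_closure n E 2 S) + 1 \<le> card (boot_closure n E 2 (insert u S))"
      using closure_growth_step[OF S(1) _ d gap] by blast
    have "((1 + ?\<alpha>) ^ Suc k - 1) / ?\<alpha> = (1 + ?\<alpha>) * (((1 + ?\<alpha>) ^ k - 1) / ?\<alpha>) + 1"
      using \<alpha> by (simp add: field_simps)
    also have "\<dots> \<le> (1 + ?\<alpha>) * card (boot_closure n E 2 S) + 1"
      using alt False \<alpha> by (intro add_right_mono mult_left_mono) auto
    finally have "((1 + ?\<alpha>) ^ Suc k - 1) / ?\<alpha> \<le> card (boot_closure n E 2 (insert u S))"
      using grow by linarith
    moreover have "card (insert u S) \<le> Suc k"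
      using S card_insert_le_m1 by (simp add: card_insert_if finite_subset)
    ultimately show ?thesis
      using S u by (intro exI[of _ "insert u S"]) auto
  qed
qed

end

lemma le_one_plus_pow_ceiling:
  fixes \<alpha> x :: real
  assumes "0 < \<alpha>" "0 < x"
  shows "x \<le> (1 + \<alpha>) ^ (nat \<lceil>1 / \<alpha>\<rceil> * nat \<lceil>log 2 x\<rceil>)"
proof -
  define t where "t = nat \<lceil>1 / \<alpha>\<rceil>"
  define j where "j = nat \<lceil>log 2 x\<rceil>"
  have "1 / \<alpha> \<le> real t"
    unfolding t_def by (rule real_nat_ceiling_ge)
  then have "2 \<le> 1 + real t * \<alpha>"
    using assms(1) by (simp add: divide_le_eq)
  also have "\<dots> \<le> (1 + \<alpha>) ^ t"
    using Bernoulli_inequality[of \<alpha> t] assms(1) by (simp add: mult.commute)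
  finally have "(2::real) ^ j \<le> ((1 + \<alpha>) ^ t) ^ j"
    by (rule power_mono) simp
  moreover have "log 2 x \<le> real j"
    unfolding j_def by (rule real_nat_ceiling_ge)
  then have "x \<le> 2 powr real j"
    using assms(2) powr_mono[of "log 2 x" "real j" 2] by simp
  ultimately show ?thesis
    unfolding t_def[symmetric] j_def[symmetric] by (simp add: powr_realpow power_mult)
qed

lemma nat_ceiling_mult_nat_ceiling_le:
  fixes \<alpha> x :: real
  assumes "0 < \<alpha>" "\<alpha> \<le> 1" "2 \<le> x"
  shows "real (nat \<lceil>1 / \<alpha>\<rceil> * nat \<lceil>log 2 x\<rceil>) \<le> 4 * log 2 x / \<alpha>"
proof -
  have double: "real (nat \<lceil>y\<rceil>) \<le> 2 * y" if "1 \<le> y" for y :: real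
    using that by linarith
  have "1 \<le> 1 / \<alpha>" "1 \<le> log 2 x"
    using assms by simp_all
  then have "real (nat \<lceil>1 / \<alpha>\<rceil>) * real (nat \<lceil>log 2 x\<rceil>) \<le> (2 * (1 / \<alpha>)) * (2 * log 2 x)"
    using assms(1) by (intro mult_mono double) auto
  then show ?thesis
    by simp
qed

lemma (in spectral_expander) min_contagious_le:
  assumes d: "2 \<le> d" and gap: "2 \<le> real d - lam" and dense: "(real d - lam) * real d \<le> 2 * real n"
  shows "real (min_contagious n E 2) \<le> 16 * real n * log 2 d / ((real d - lam) * real d)"
proof -
  let ?\<alpha> = growth_rate
  define K where "K = nat \<lceil>1 / ?\<alpha>\<rceil> * nat \<lceil>log 2 (real d)\<rceil>"
  have \<alpha>: "0 < ?\<alpha>" "?\<alpha> \<le> 1"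
    unfolding growth_rate_def using gap d dense vertices_pos by (simp_all add: field_simps)
  obtain S where S: "S \<subseteq> {0..<n}" "card S \<le> K"
    and alt: "boot_closure n E 2 S = {0..<n} \<or> ((1 + ?\<alpha>) ^ K - 1) / ?\<alpha> \<le> card (boot_closure n E 2 S)"
    using closure_growth[OF d gap] by blast
  have "boot_closure n E 2 S = {0..<n}"
  proof (rule ccontr)
    assume proper: "boot_closure n E 2 S \<noteq> {0..<n}"
    have "real d \<le> (1 + ?\<alpha>) ^ K"
      unfolding K_def using le_one_plus_pow_ceiling \<alpha>(1) d by simp
    then have "(real d - 1) / ?\<alpha> \<le> ((1 + ?\<alpha>) ^ K - 1) / ?\<alpha>"
      using \<alpha>(1) by (intro divide_right_mono) auto
    also have "\<dots> \<le> card (boot_closure n E 2 S)"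
      using alt proper by blast
    finally have "real d - 1 \<le> ?\<alpha> * card (boot_closure n E 2 S)"
      using \<alpha>(1) by (simp add: divide_le_eq mult.commute)
    also have "\<dots> \<le> real d / 4"
      using boot_closed_boot_closure boot_closure_subset_vertices[OF S(1)] proper
      by (rule growth_rate_mult_closed_card_le)
    finally show False
      using d by simp
  qed
  then have "min_contagious n E 2 \<le> K"
    using min_contagious_le_card[of n E 2 S] S unfolding contagious_def by simp
  moreover have "real K \<le> 4 * log 2 (real d) / ?\<alpha>"
    unfolding K_def using \<alpha> d by (intro nat_ceiling_mult_nat_ceiling_le) auto
  moreover have "4 * log 2 (real d) / ?\<alpha> = 16 * real n * log 2 d / ((real d - lam) * real d)"
    unfolding growth_rate_def using gap d vertices_pos by (simp add: field_simps)
  ultimately show ?thesis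
    by linarith
qed

lemma min_contagious_le_if_eps_degree_lt_two:
  assumes \<epsilon>: "0 < \<epsilon>" "\<epsilon> * real d < 2" and d: "2 \<le> d"
  shows "real (min_contagious n E 2) \<le> 16 * (real n * log 2 (real d)) / (\<epsilon>\<^sup>2 * (real d)\<^sup>2)"
proof -
  have "(\<epsilon> * real d)\<^sup>2 \<le> 2\<^sup>2"
    using \<epsilon> by (intro power_mono) auto
  then have "real n * (\<epsilon>\<^sup>2 * (real d)\<^sup>2) \<le> real n * 4"
    by (intro mult_left_mono) (simp_all add: power_mult_distrib)
  also have "\<dots> \<le> real n * (16 * log 2 (real d))"
  proof (intro mult_left_mono)
    have "1 \<le> log 2 (real d)"
      using d by simp
    then show "4 \<le> 16 * log 2 (real d)"
      by linarith
  qed simp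
  finally have "real n \<le> 16 * (real n * log 2 (real d)) / (\<epsilon>\<^sup>2 * (real d)\<^sup>2)"
    using \<epsilon> d by (simp add: le_divide_eq)
  then show ?thesis
    using min_contagious_le_card[OF contagious_vertices, of n E 2] by simp
qed

lemma ndl_graph_C4_free_min_contagious_le:
  assumes ndl: "ndl_graph n d lam E" and c4: "C4_free E" and d: "2 \<le> d"
    and \<epsilon>: "0 < \<epsilon>" "\<epsilon> < 1" and lam: "lam \<le> (1 - \<epsilon>) * real d" and \<epsilon>d: "2 \<le> \<epsilon> * real d"
  shows "real (min_contagious n E 2) \<le> 16 * (real n * log 2 (real d)) / (\<epsilon>\<^sup>2 * (real d)\<^sup>2)"
proof -
  interpret spectral_expander n E d "(1 - \<epsilon>) * real d"
    using spectral_expander_mono[OF ndl_graph_spectral_expander[OF ndl] lam] .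
  have gap: "real d - (1 - \<epsilon>) * real d = \<epsilon> * real d"
    by (simp add: algebra_simps)
  have "\<epsilon> * (real d * real d) \<le> 1 * (real d * real d)"
    using \<epsilon> by (intro mult_right_mono) auto
  then have "(real d - (1 - \<epsilon>) * real d) * real d \<le> 2 * real n"
    using C4_free_sq_degree_le[OF simple regular c4 vertices_pos] unfolding gap by (simp add: mult.assoc)
  then have "real (min_contagious n E 2) \<le> 16 * real n * log 2 d / (\<epsilon> * real d * real d)"
    using min_contagious_le[OF d] \<epsilon>d unfolding gap by simp
  also have "\<dots> \<le> 16 * real n * log 2 d / (\<epsilon>\<^sup>2 * (real d)\<^sup>2)"
  proof (rule divide_left_mono)
    have "\<epsilon> * (\<epsilon> * real d * real d) \<le> 1 * (\<epsilon> * real d * real d)"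
      using \<epsilon> by (intro mult_right_mono) auto
    then show "\<epsilon>\<^sup>2 * (real d)\<^sup>2 \<le> \<epsilon> * real d * real d"
      by (simp add: power2_eq_square mult.assoc)
    show "0 \<le> 16 * real n * log 2 (real d)"
      using d by simp
    show "0 < \<epsilon> * real d * real d * (\<epsilon>\<^sup>2 * (real d)\<^sup>2)"
      using \<epsilon> d by simp
  qed
  finally show ?thesis
    by (simp only: mult.assoc)
qed

theorem theorem6:
  "\<exists>C::real. \<forall>(\<epsilon>::real) (n::nat) (d::nat) (lam::real) (E::nat \<Rightarrow> nat \<Rightarrow> bool).
     0 < \<epsilon> \<and> \<epsilon> < 1 \<and> d \<ge> 2 \<and> ndl_graph n d lam E \<and> lam \<le> (1 - \<epsilon>) * real d \<and> C4_free E
     \<longrightarrow> real (min_contagious n E 2) \<le> C * (real n * log 2 (real d)) / (\<epsilon>^2 * (real d)^2)"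
proof (intro exI[of _ 16] allI impI, elim conjE)
  fix \<epsilon> lam :: real and n d :: nat and E :: "nat \<Rightarrow> nat \<Rightarrow> bool"
  assume \<epsilon>: "0 < \<epsilon>" "\<epsilon> < 1" and d: "d \<ge> 2" and ndl: "ndl_graph n d lam E"
    and lam: "lam \<le> (1 - \<epsilon>) * real d" and c4: "C4_free E"
  show "real (min_contagious n E 2) \<le> 16 * (real n * log 2 (real d)) / (\<epsilon>\<^sup>2 * (real d)\<^sup>2)"
  proof (cases "2 \<le> \<epsilon> * real d")
    case True
    then show ?thesis
      by (rule ndl_graph_C4_free_min_contagious_le[OF ndl c4 d \<epsilon> lam])
  next
    case False
    then show ?thesis
      using \<epsilon>(1) d by (intro min_contagious_le_if_eps_degree_lt_two) auto
  qed
qed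

end
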